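(* Let $C\in\mathbb R^{d\times d}$ satisfy Condition A and let $L f=-\mathrm{div}_x(C_S\nabla_xf+Cxf)$ be the Fokker–Planck operator on $\mathcal H=L^2(\mathbb R^d,f_\infty^{-1})$. Transported to the Boson Fock space $\mathcal F_s(\mathbb R^d)$ via the isometry $\Psi$, $L$ is the second quantization of $C$ (regarded as an operator on the Hilbert space $\mathbb R^d$), i.e. $\Psi L\Psi^{-1}=d\Gamma(C)$.
   Context: $C_S=\frac12(C+C^T)$; Condition A: $C_S$ positive semi-definite and no non-trivial $C^T$-invariant subspace of $\ker C_S$. $f_\infty(x)=(2\pi)^{-d/2}e^{-|x|^2/2}$, $\mathcal H$ has inner product $\int fgf_\infty^{-1}dx$. Fock space: for $H=\mathbb R^d$, let $F^{(m)}$ ($m\ge1$) be the space of symmetric $m$-tensors over $\mathbb R^d$ with the Frobenius inner product $\langle A,B\rangle_{\mathcal F}=\sum_{i_1,\dots,i_m}A_{i_1\dots i_m}B_{i_1\dots i_m}$ (this is the $m$-fold symmetric tensor product of $\mathbb R^d$), $F^{(0)}=\mathbb R$, and $\mathcal F_s(\mathbb R^d)$ the completed orthogonal direct sum $\bigoplus_{m\ge0}F^{(m)}$, i.e. sequences $\psi=(\psi^{(m)})_{m\ge0}$ with $\|\psi\|^2=\sum_m\|\psi^{(m)}\|^2_{\mathcal F}<\infty$. The second quantization $d\Gamma(C)$ is defined on finite sequences (the incomplete direct sum) by $d\Gamma(C)|_{F^{(0)}}=0$ and, on $F^{(m)}$, $d\Gamma(C)=C\otimes\mathbb 1\otimes\cdots\otimes\mathbb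 1+\cdots+\mathbb 1\otimes\cdots\otimes\mathbb 1\otimes C$, i.e. $(d\Gamma(C)A)_{i_1\dots i_m}=\sum_{r=1}^m\sum_{j=1}^dC_{i_rj}A_{i_1\dots i_{r-1}ji_{r+1}\dots i_m}$. The map $\Psi$: with $g(y)=(2\pi)^{-1/2}e^{-y^2/2}$, probabilists' Hermite polynomials $H_n$, $g_\alpha(x)=\prod_iH_{\alpha_i}(x_i)g(x_i)$ and $d_\alpha=\langle f,g_\alpha\rangle_{\mathcal H}/\|g_\alpha\|_{\mathcal H}^2$, set $\Psi f=(\widetilde D^{(m)})_{m\ge0}$ with $\widetilde D^{(0)}=\langle f,f_\infty\rangle_{\mathcal H}$ and, for $m\ge1$, $\widetilde D^{(m)}_{i_1\dots i_m}=\sqrt{m!}\,d_\alpha/\gamma_\alpha$ where $\alpha_k=\#\{r:i_r=k\}$ and $\gamma_\alpha=m!/(\alpha_1!\cdots\alpha_d!)$. $\Psi:\mathcal H\to\mathcal F_s(\mathbb R^d)$ is an isometric isomorphism. *)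

theory Defs
  imports "HOL-Analysis.Analysis"
begin

text \<open>Vectors in R^d are real^'n with d = CARD('n); matrices are real^'n^'n,
  with entry (i,j) given by C $ i $ j.\<close>

definition sym_part :: "real^'n^'n \<Rightarrow> real^'n^'n" where
  "sym_part C = (1/2) *\<^sub>R (C + transpose C)"

definition condition_A :: "real^'n^'n \<Rightarrow> bool" where
  "condition_A C \<longleftrightarrow>
     (\<forall>x. x \<bullet> (sym_part C *v x) \<ge> 0) \<and>
     (\<forall>V. subspace V \<and> V \<subseteq> {x. sym_part C *v x = 0} \<and>
          (\<forall>x\<in>V. transpose C *v x \<in> V) \<longrightarrow> V = {0})"

definition partial :: "'n::finite \<Rightarrow> (real^'n \<Rightarrow> real) \<Rightarrow> real^'n \<Rightarrow> real" where
  "partial i f x = deriv (\<lambda>t. f (x + t *\<^sub>R axis i 1)) 0"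

definition FP_op :: "real^'n^'n \<Rightarrow> (real^'n \<Rightarrow> real) \<Rightarrow> real^'n \<Rightarrow> real" where
  "FP_op C f x = - (\<Sum>i\<in>UNIV. partial i
      (\<lambda>y. (\<Sum>j\<in>UNIV. sym_part C $ i $ j * partial j f y) + (\<Sum>j\<in>UNIV. C $ i $ j * y $ j) * f y) x)"

definition f_inf :: "real^'n::finite \<Rightarrow> real" where
  "f_inf x = (2 * pi) powr (- real CARD('n) / 2) * exp (- (norm x ^ 2) / 2)"

definition H_inner :: "(real^'n::finite \<Rightarrow> real) \<Rightarrow> (real^'n \<Rightarrow> real) \<Rightarrow> real" where
  "H_inner f g = (\<integral>x. f x * g x / f_inf x \<partial>lborel)"

fun hermite :: "nat \<Rightarrow> real \<Rightarrow> real" where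
  "hermite 0 y = 1"
| "hermite (Suc 0) y = y"
| "hermite (Suc (Suc n)) y = y * hermite (Suc n) y - real (Suc n) * hermite n y"

definition gauss1 :: "real \<Rightarrow> real" where
  "gauss1 y = exp (- (y ^ 2) / 2) / sqrt (2 * pi)"

definition g_multi :: "('n::finite \<Rightarrow> nat) \<Rightarrow> real^'n \<Rightarrow> real" where
  "g_multi \<alpha> x = (\<Prod>i\<in>UNIV. hermite (\<alpha> i) (x $ i) * gauss1 (x $ i))"

text \<open>Fock space elements: psi m is the m-tensor, read on index lists of length m.\<close>
type_synonym 'n fock = "nat \<Rightarrow> 'n list \<Rightarrow> real"

definition multi_of :: "'n list \<Rightarrow> 'n \<Rightarrow> nat" where
  "multi_of xs = (\<lambda>k. count (mset xs) k)"

definition d_coeff :: "(real^'n::finite \<Rightarrow> real) \<Rightarrow> ('n \<Rightarrow> nat) \<Rightarrow> real" where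
  "d_coeff f \<alpha> = H_inner f (g_multi \<alpha>) / H_inner (g_multi \<alpha>) (g_multi \<alpha>)"

definition gamma_coeff :: "nat \<Rightarrow> ('n::finite \<Rightarrow> nat) \<Rightarrow> real" where
  "gamma_coeff m \<alpha> = fact m / (\<Prod>k\<in>UNIV. fact (\<alpha> k))"

definition Psi :: "(real^'n::finite \<Rightarrow> real) \<Rightarrow> 'n fock" where
  "Psi f m xs = (if m = 0 then H_inner f f_inf
      else sqrt (fact m) * d_coeff f (multi_of xs) / gamma_coeff m (multi_of xs))"

definition dGamma :: "real^'n^'n \<Rightarrow> 'n::finite fock \<Rightarrow> 'n fock" where
  "dGamma C A m xs = (\<Sum>r<m. \<Sum>j\<in>UNIV. C $ (xs ! r) $ j * A m (xs[r := j]))"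

end

theory Submission
  imports Defs "HOL-Probability.Distributions" "HOL-Computational_Algebra.Polynomial"
begin

(*
  The Hermite functions g_alpha are orthogonal in H with <g_alpha, g_beta> = [alpha = beta] alpha!,
  and Psi reads off coefficients in this basis: Psi f m xs = <f, g_alpha> / sqrt m!, where alpha
  counts how often each index occurs in xs. On the basis, L acts by index shifts: differentiation
  raises an index, d_i g_alpha = - g_(alpha+e_i), and multiplication by a coordinate raises or
  lowers one, x_j g_alpha = g_(alpha+e_j) + alpha_j g_(alpha-e_j). The terms g_(alpha+e_i+e_j)
  coming from C_S and from C x cancel by symmetry, and so do the diagonal terms, leaving
    L g_alpha = sum_(i,j) C_ij alpha_j g_(alpha-e_j+e_i).
  By orthogonality alpha_j <g_(alpha-e_j+e_i), g_beta> = beta_i <g_alpha, g_(beta-e_i+e_j)>, hence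
    <L f, g_beta> = sum_(i,j) C_ij beta_i <f, g_(beta-e_i+e_j)>,
  and spreading the factor beta_i over the beta_i positions r with xs!r = i gives the sum over r
  that defines dGamma C. Orthogonality of the Hermite polynomials comes from Stein's identity
  E[X p(X)] = E[p'(X)] for a standard Gaussian X.
*)

section \<open>Hermite polynomials and Gaussian expectations\<close>

fun hermite_poly :: "nat \<Rightarrow> real poly" where
  "hermite_poly 0 = 1"
| "hermite_poly (Suc 0) = [:0, 1:]"
| "hermite_poly (Suc (Suc n)) = pCons 0 (hermite_poly (Suc n)) - smult (real (Suc n)) (hermite_poly n)"

lemma poly_hermite_poly: "poly (hermite_poly n) = hermite n"
  by (induction n rule: hermite_poly.induct) auto

lemma hermite_poly_Suc: "hermite_poly (Suc n) = pCons 0 (hermite_poly n) - smult (real n) (hermite_poly (n - 1))"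
  by (cases n) auto

lemma hermite_Suc: "hermite (Suc n) y = y * hermite n y - real n * hermite (n - 1) y"
  by (cases n) auto

lemma pderiv_hermite_poly: "pderiv (hermite_poly n) = smult (real n) (hermite_poly (n - 1))"
proof (induction n rule: hermite_poly.induct)
  case (3 n)
  have "pderiv (hermite_poly (Suc (Suc n)))
      = hermite_poly (Suc n) + smult (real (Suc n)) (pCons 0 (hermite_poly n) - smult (real n) (hermite_poly (n - 1)))"
    using 3 by (simp add: pderiv_pCons pderiv_diff pderiv_smult smult_diff_right smult_pCons[symmetric] del: of_nat_Suc)
  also have "\<dots> = smult (1 + real (Suc n)) (hermite_poly (Suc n))"
    by (simp only: hermite_poly_Suc[of n, symmetric] smult_add_left smult_1_left)
  finally show ?case by simp
qed (simp_all add: pderiv_pCons)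

lemma degree_hermite_poly: "degree (hermite_poly n) \<le> n"
proof (induction n rule: hermite_poly.induct)
  case (3 n)
  have "degree (pCons 0 (hermite_poly (Suc n))) \<le> Suc (Suc n)"
    using 3 by (metis Suc_le_mono degree_pCons_le le_trans)
  moreover have "degree (smult (real (Suc n)) (hermite_poly n)) \<le> Suc (Suc n)"
    using 3 by (meson degree_smult_le le_SucI order_trans)
  ultimately show ?case by (simp add: degree_diff_le)
qed (auto simp: degree_pCons_eq_if)

lemma coeff_hermite_poly_self: "coeff (hermite_poly n) n = 1"
proof (induction n rule: hermite_poly.induct)
  case (3 n)
  have "coeff (hermite_poly n) (Suc (Suc n)) = 0"
    using degree_hermite_poly[of n] by (simp add: coeff_eq_0)
  with 3 show ?case by simp
qed simp_all

definition gauss_expect :: "real poly \<Rightarrow> real" where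
  "gauss_expect p = (\<integral>x. std_normal_density x * poly p x \<partial>lborel)"

definition gauss_moment :: "nat \<Rightarrow> real" where
  "gauss_moment k = (\<integral>x. std_normal_density x * x ^ k \<partial>lborel)"

lemma gauss_moment_Suc_Suc: "gauss_moment (Suc (Suc k)) = real (Suc k) * gauss_moment k"
proof (cases "even k")
  case True
  then obtain j where k: "k = 2 * j" by (auto elim: evenE)
  have "gauss_moment (Suc (Suc k)) = fact (2 * Suc j) / (2 ^ Suc j * fact (Suc j))"
    unfolding gauss_moment_def using integral_std_normal_moment_even[of "Suc j"] k by simp
  also have "\<dots> = real (Suc k) * (fact (2 * j) / (2 ^ j * fact j))"
    by (simp add: k fact_Suc field_simps del: fact_Suc) (simp add: algebra_simps)
  also have "\<dots> = real (Suc k) * gauss_moment k"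
    unfolding gauss_moment_def using integral_std_normal_moment_even[of j] k by simp
  finally show ?thesis .
next
  case False
  then obtain j where k: "k = 2 * j + 1" by (metis oddE)
  then show ?thesis
    unfolding gauss_moment_def using integral_std_normal_moment_odd[of j] integral_std_normal_moment_odd[of "Suc j"]
    by simp
qed

lemma gauss_moment_1: "gauss_moment (Suc 0) = 0"
  unfolding gauss_moment_def using integral_std_normal_moment_odd[of 0] by simp

lemma integrable_std_normal_poly: "integrable lborel (\<lambda>x. std_normal_density x * poly p x)"
proof -
  have "(\<lambda>x. std_normal_density x * poly p x) = (\<lambda>x. \<Sum>i\<le>degree p. coeff p i * (std_normal_density x * x ^ i))"
    by (auto simp: poly_altdef sum_distrib_left algebra_simps)
  then show ?thesis
    by (simp add: integrable_std_normal_moment)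
qed

lemma gauss_expect_moments:
  assumes "degree p \<le> n"
  shows "gauss_expect p = (\<Sum>i\<le>n. coeff p i * gauss_moment i)"
proof -
  have "poly p x = (\<Sum>i\<le>n. coeff p i * x ^ i)" for x
    by (subst (1) poly_as_sum_of_monoms'[OF assms, symmetric]) (simp add: poly_sum poly_monom)
  then have "gauss_expect p = (\<integral>x. (\<Sum>i\<le>n. coeff p i * (std_normal_density x * x ^ i)) \<partial>lborel)"
    unfolding gauss_expect_def by (simp add: sum_distrib_left algebra_simps)
  also have "\<dots> = (\<Sum>i\<le>n. coeff p i * gauss_moment i)"
    unfolding gauss_moment_def by (simp add: integrable_std_normal_moment)
  finally show ?thesis .
qed

lemma gauss_expect_add: "gauss_expect (p + q) = gauss_expect p + gauss_expect q"
  unfolding gauss_expect_def using integrable_std_normal_poly[of p] integrable_std_normal_poly[of q]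
  by (simp add: distrib_left)

lemma gauss_expect_diff: "gauss_expect (p - q) = gauss_expect p - gauss_expect q"
  unfolding gauss_expect_def using integrable_std_normal_poly[of p] integrable_std_normal_poly[of q]
  by (simp add: right_diff_distrib)

lemma gauss_expect_const: "gauss_expect [:a:] = a"
  unfolding gauss_expect_def using integral_std_normal_moment_even[of 0] by simp

text \<open>Stein's identity \<open>E[X p(X)] = E[p'(X)]\<close>, since \<open>pCons 0 p\<close> is \<open>X p(X)\<close>.\<close>
lemma gauss_expect_pCons_0: "gauss_expect (pCons 0 p) = gauss_expect (pderiv p)"
proof -
  define n where "n = degree p"
  have "gauss_expect (pCons 0 p) = (\<Sum>i\<le>Suc n. coeff (pCons 0 p) i * gauss_moment i)"
    by (rule gauss_expect_moments) (simp add: n_def degree_pCons_le)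
  also have "\<dots> = (\<Sum>i\<le>n. coeff p i * gauss_moment (Suc i))"
    by (subst sum.atMost_Suc_shift) simp
  also have "\<dots> = (\<Sum>i\<le>Suc n. coeff p i * gauss_moment (Suc i))"
    by (simp add: n_def coeff_eq_0)
  also have "\<dots> = (\<Sum>i\<le>n. coeff p (Suc i) * gauss_moment (Suc (Suc i)))"
    by (subst sum.atMost_Suc_shift) (simp add: gauss_moment_1)
  also have "\<dots> = (\<Sum>i\<le>n. coeff (pderiv p) i * gauss_moment i)"
    by (simp add: gauss_moment_Suc_Suc coeff_pderiv algebra_simps del: of_nat_Suc)
  also have "\<dots> = gauss_expect (pderiv p)"
    by (rule gauss_expect_moments[symmetric]) (simp add: n_def degree_pderiv)
  finally show ?thesis .
qed

text \<open>Since \<open>He_(n+1) = X He_n - He_n'\<close>, Stein's identity moves one derivative onto \<open>q\<close>.\<close>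
lemma gauss_expect_hermite_poly_mult: "gauss_expect (hermite_poly n * q) = gauss_expect ((pderiv ^^ n) q)"
proof (induction n arbitrary: q)
  case (Suc n)
  have "hermite_poly (Suc n) * q = pCons 0 (hermite_poly n * q) - pderiv (hermite_poly n) * q"
    by (simp add: hermite_poly_Suc pderiv_hermite_poly algebra_simps)
  then have "gauss_expect (hermite_poly (Suc n) * q) = gauss_expect (hermite_poly n * pderiv q)"
    by (simp add: gauss_expect_diff gauss_expect_pCons_0 pderiv_mult gauss_expect_add mult.commute)
  also have "\<dots> = gauss_expect ((pderiv ^^ Suc n) q)"
    using Suc by (simp add: funpow_Suc_right del: funpow.simps)
  finally show ?case .
qed simp

lemma pderiv_funpow_degree:
  assumes "degree p \<le> n"
  shows "(pderiv ^^ n) p = [:fact n * coeff p n:]"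
  using assms
proof (induction n arbitrary: p)
  case 0
  then show ?case by (auto elim: degree_eq_zeroE)
next
  case (Suc n)
  have "(pderiv ^^ Suc n) p = [:fact n * coeff (pderiv p) n:]"
    using Suc by (simp add: funpow_Suc_right degree_pderiv del: funpow.simps)
  then show ?case by (simp add: coeff_pderiv algebra_simps del: of_nat_Suc)
qed

lemma gauss_expect_hermite_poly_orthogonal:
  "gauss_expect (hermite_poly m * hermite_poly n) = (if m = n then fact n else 0)"
proof -
  have *: "gauss_expect (hermite_poly m * hermite_poly n) = (if m = n then fact n else 0)" if "n \<le> m" for m n
  proof -
    have "coeff (hermite_poly n) m = (if m = n then 1 else 0)"
      using that degree_hermite_poly[of n] by (auto simp: coeff_hermite_poly_self coeff_eq_0)
    then show ?thesis
      using order.trans[OF degree_hermite_poly that]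
      by (simp add: gauss_expect_hermite_poly_mult pderiv_funpow_degree gauss_expect_const)
  qed
  show ?thesis
    using *[of n m] *[of m n] by (cases "n \<le> m") (auto simp: mult.commute)
qed

lemma gauss1_eq_std_normal_density: "gauss1 = std_normal_density"
  by (simp add: fun_eq_iff gauss1_def std_normal_density_def)

lemma
  shows integrable_hermite_orthogonal: "integrable lborel (\<lambda>y. hermite m y * hermite n y * gauss1 y)"
    and integral_hermite_orthogonal:
      "(\<integral>y. hermite m y * hermite n y * gauss1 y \<partial>lborel) = (if m = n then fact n else 0)"
proof -
  have eq: "(\<lambda>y. hermite m y * hermite n y * gauss1 y)
      = (\<lambda>y. std_normal_density y * poly (hermite_poly m * hermite_poly n) y)"
    by (auto simp: gauss1_eq_std_normal_density poly_hermite_poly)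
  show "integrable lborel (\<lambda>y. hermite m y * hermite n y * gauss1 y)"
    unfolding eq by (rule integrable_std_normal_poly)
  show "(\<integral>y. hermite m y * hermite n y * gauss1 y \<partial>lborel) = (if m = n then fact n else 0)"
    unfolding eq using gauss_expect_hermite_poly_orthogonal[of m n] by (simp add: gauss_expect_def)
qed

lemma hermite_function_deriv:
  "((\<lambda>y. hermite n y * gauss1 y) has_real_derivative - (hermite (Suc n) y * gauss1 y)) (at y)"
proof -
  have "(hermite n has_real_derivative real n * hermite (n - 1) y) (at y)"
    using poly_DERIV[of "hermite_poly n" y] by (simp add: poly_hermite_poly pderiv_hermite_poly)
  moreover have "(gauss1 has_real_derivative - y * gauss1 y) (at y)"
    unfolding gauss1_def by (auto intro!: derivative_eq_intros simp: field_simps power2_eq_square)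
  ultimately have "((\<lambda>y. hermite n y * gauss1 y) has_real_derivative
      real n * hermite (n - 1) y * gauss1 y + - y * gauss1 y * hermite n y) (at y)"
    by (rule DERIV_mult)
  then show ?thesis
    by (simp add: hermite_Suc algebra_simps)
qed

section \<open>Multivariate Hermite functions\<close>

lemma
  fixes h :: "'n::finite \<Rightarrow> real \<Rightarrow> real"
  assumes int: "\<And>i. integrable lborel (h i)"
  shows integrable_prod_vec_nth: "integrable lborel (\<lambda>x::real^'n. \<Prod>i\<in>UNIV. h i (x $ i))"
    and integral_prod_vec_nth:
      "(\<integral>x. (\<Prod>i\<in>UNIV. h i (x $ i)) \<partial>(lborel::(real^'n) measure)) = (\<Prod>i\<in>UNIV. integral\<^sup>L lborel (h i))"
proof -
  interpret product_sigma_finite "\<lambda>_. lborel" by standard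
  define H where "H b = h (axis_index b)" for b :: "real^'n"
  define T where "T f = (\<Sum>b\<in>Basis. f b *\<^sub>R b)" for f :: "real^'n \<Rightarrow> real"
  have inj: "inj (\<lambda>i::'n. axis i (1::real))"
    by (auto intro!: injI simp: axis_eq_axis)
  have Basis_eq: "(Basis :: (real^'n) set) = range (\<lambda>i. axis i 1)"
    by (auto simp: Basis_vec_def)
  have prod_eq: "(\<lambda>x::real^'n. \<Prod>i\<in>UNIV. h i (x $ i)) = (\<lambda>x. \<Prod>b\<in>Basis. H b (x \<bullet> b))"
    by (auto simp: Basis_eq prod.reindex[OF inj] H_def cart_eq_inner_axis[symmetric])
  have integral_eq: "(\<Prod>i\<in>UNIV. integral\<^sup>L lborel (h i)) = (\<Prod>b\<in>(Basis::(real^'n) set). integral\<^sup>L lborel (H b))"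
    by (auto simp: Basis_eq prod.reindex[OF inj] H_def)
  have [measurable]: "H b \<in> borel_measurable borel" for b
    unfolding H_def using borel_measurable_integrable[OF int] by simp
  have [measurable]: "T \<in> measurable (\<Pi>\<^sub>M b\<in>Basis. lborel) borel"
    unfolding T_def by measurable
  have T_inner: "T f \<bullet> b = f b" if "b \<in> Basis" for f b
    using that unfolding T_def by (simp add: inner_sum_left inner_Basis if_distrib cong: if_cong)
  have lborel_distr: "lborel = distr (\<Pi>\<^sub>M b\<in>(Basis::(real^'n) set). lborel) borel T"
    unfolding T_def by (rule lborel_eq)
  have "integrable (\<Pi>\<^sub>M b\<in>(Basis::(real^'n) set). lborel) (\<lambda>f. \<Prod>b\<in>Basis. H b (f b))"
    by (rule product_integrable_prod) (auto simp: H_def int)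
  then have "integrable (\<Pi>\<^sub>M b\<in>(Basis::(real^'n) set). lborel) (\<lambda>f. \<Prod>b\<in>Basis. H b (T f \<bullet> b))"
    by (rule Bochner_Integration.integrable_cong[THEN iffD1, rotated 2]) (simp_all add: T_inner)
  then show "integrable lborel (\<lambda>x::real^'n. \<Prod>i\<in>UNIV. h i (x $ i))"
    unfolding prod_eq by (subst lborel_distr, subst integrable_distr_eq) auto
  have "(\<integral>x. (\<Prod>b\<in>Basis. H b (x \<bullet> b)) \<partial>(lborel::(real^'n) measure))
      = (\<integral>f. (\<Prod>b\<in>Basis. H b (T f \<bullet> b)) \<partial>(\<Pi>\<^sub>M b\<in>(Basis::(real^'n) set). lborel))"
    by (subst lborel_distr, subst integral_distr) auto
  also have "\<dots> = (\<integral>f. (\<Prod>b\<in>Basis. H b (f b)) \<partial>(\<Pi>\<^sub>M b\<in>(Basis::(real^'n) set). lborel))"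
    by (rule Bochner_Integration.integral_cong) (auto simp: T_inner)
  also have "\<dots> = (\<Prod>b\<in>(Basis::(real^'n) set). integral\<^sup>L lborel (H b))"
    by (rule product_integral_prod) (auto simp: H_def int)
  finally show "(\<integral>x. (\<Prod>i\<in>UNIV. h i (x $ i)) \<partial>(lborel::(real^'n) measure)) = (\<Prod>i\<in>UNIV. integral\<^sup>L lborel (h i))"
    unfolding prod_eq integral_eq .
qed

lemma f_inf_eq_prod: "f_inf (x::real^'n) = (\<Prod>i\<in>UNIV. gauss1 (x $ i))"
proof -
  have norm_eq: "norm x ^ 2 = (\<Sum>i\<in>UNIV. (x $ i)\<^sup>2)"
    by (subst power2_norm_eq_inner) (simp add: inner_vec_def power2_eq_square)
  have "sqrt (2 * pi) ^ CARD('n) = (2 * pi) powr (real CARD('n) / 2)"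
    by (simp add: powr_half_sqrt[symmetric] powr_power)
  then have const_eq: "inverse (sqrt (2 * pi)) ^ CARD('n) = (2 * pi) powr (- real CARD('n) / 2)"
    by (simp add: power_inverse powr_minus)
  have "- (\<Sum>i\<in>UNIV. (x $ i)\<^sup>2) / 2 = (\<Sum>i\<in>UNIV. - ((x $ i)\<^sup>2) / 2)"
    by (simp add: sum_negf sum_divide_distrib)
  then have exp_eq: "exp (- (norm x ^ 2) / 2) = (\<Prod>i\<in>UNIV. exp (- ((x $ i)\<^sup>2) / 2))"
    by (simp add: norm_eq exp_sum)
  have "(\<Prod>i\<in>UNIV. gauss1 (x $ i))
      = (\<Prod>i\<in>UNIV. exp (- ((x $ i)\<^sup>2) / 2)) * (\<Prod>i\<in>(UNIV::'n set). inverse (sqrt (2 * pi)))"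
    by (simp only: gauss1_def divide_inverse prod.distrib)
  also have "\<dots> = exp (- (norm x ^ 2) / 2) * (2 * pi) powr (- real CARD('n) / 2)"
    by (simp only: exp_eq prod_constant const_eq)
  finally show ?thesis
    by (simp only: f_inf_def mult.commute)
qed

lemma f_inf_eq_g_multi_0: "f_inf = g_multi (\<lambda>_. 0)"
  by (simp add: fun_eq_iff f_inf_eq_prod g_multi_def)

lemma g_multi_mult_divide_f_inf:
  "g_multi \<alpha> x * g_multi \<beta> x / f_inf x
     = (\<Prod>i\<in>UNIV. hermite (\<alpha> i) (x $ i) * hermite (\<beta> i) (x $ i) * gauss1 (x $ i))"
proof -
  have "gauss1 y \<noteq> 0" for y
    by (simp add: gauss1_def)
  then show ?thesis
    unfolding g_multi_def f_inf_eq_prod prod.distrib[symmetric] prod_dividef[symmetric]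
    by (intro prod.cong) (simp_all add: field_simps)
qed

definition mfact :: "('n::finite \<Rightarrow> nat) \<Rightarrow> real" where
  "mfact \<alpha> = (\<Prod>i\<in>UNIV. fact (\<alpha> i))"

lemma mfact_pos: "0 < mfact \<alpha>"
  unfolding mfact_def by (rule prod_pos) simp

lemma integrable_g_multi_H_inner: "integrable lborel (\<lambda>x. g_multi \<alpha> x * g_multi \<beta> x / f_inf x)"
  unfolding g_multi_mult_divide_f_inf by (intro integrable_prod_vec_nth integrable_hermite_orthogonal)

lemma H_inner_g_multi: "H_inner (g_multi \<alpha>) (g_multi \<beta>) = (if \<alpha> = \<beta> then mfact \<alpha> else 0)"
proof -
  have "H_inner (g_multi \<alpha>) (g_multi \<beta>) = (\<Prod>i\<in>UNIV. if \<alpha> i = \<beta> i then fact (\<beta> i) else 0)"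
    unfolding H_inner_def g_multi_mult_divide_f_inf
    by (subst integral_prod_vec_nth) (auto intro: integrable_hermite_orthogonal simp: integral_hermite_orthogonal)
  also have "\<dots> = (if \<alpha> = \<beta> then mfact \<alpha> else 0)"
    by (auto simp: mfact_def fun_eq_iff)
  finally show ?thesis .
qed

lemma H_inner_sum_g_multi:
  "H_inner (\<lambda>x. \<Sum>a\<in>A. w a * g_multi (\<gamma> a) x) (g_multi \<beta>)
     = (\<Sum>a\<in>A. w a * H_inner (g_multi (\<gamma> a)) (g_multi \<beta>))"
proof -
  have "H_inner (\<lambda>x. \<Sum>a\<in>A. w a * g_multi (\<gamma> a) x) (g_multi \<beta>)
      = (\<integral>x. (\<Sum>a\<in>A. w a * (g_multi (\<gamma> a) x * g_multi \<beta> x / f_inf x)) \<partial>lborel)"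
    unfolding H_inner_def
    by (intro Bochner_Integration.integral_cong) (simp_all add: sum_distrib_right sum_divide_distrib mult.assoc)
  also have "\<dots> = (\<Sum>a\<in>A. (\<integral>x. w a * (g_multi (\<gamma> a) x * g_multi \<beta> x / f_inf x) \<partial>lborel))"
    by (rule Bochner_Integration.integral_sum) (intro Bochner_Integration.integrable_mult_right integrable_g_multi_H_inner)
  finally show ?thesis
    by (simp only: integral_mult_right_zero H_inner_def)
qed

definition raise :: "'n \<Rightarrow> ('n \<Rightarrow> nat) \<Rightarrow> 'n \<Rightarrow> nat" where
  "raise i \<alpha> = \<alpha>(i := Suc (\<alpha> i))"

text \<open>Subtraction is truncated, so \<open>lower i \<alpha> = \<alpha>\<close> if \<open>\<alpha> i = 0\<close>;
  such terms always carry the factor \<open>real (\<alpha> i) = 0\<close>.\<close>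
definition lower :: "'n \<Rightarrow> ('n \<Rightarrow> nat) \<Rightarrow> 'n \<Rightarrow> nat" where
  "lower i \<alpha> = \<alpha>(i := \<alpha> i - 1)"

lemma raise_apply: "raise i \<alpha> j = (if j = i then Suc (\<alpha> i) else \<alpha> j)"
  by (simp add: raise_def)

lemma lower_apply: "lower i \<alpha> j = (if j = i then \<alpha> i - 1 else \<alpha> j)"
  by (simp add: lower_def)

lemma lower_raise [simp]: "lower i (raise i \<alpha>) = \<alpha>"
  by (simp add: fun_eq_iff raise_def lower_def)

lemma raise_lower: "0 < \<alpha> i \<Longrightarrow> raise i (lower i \<alpha>) = \<alpha>"
  by (simp add: fun_eq_iff raise_def lower_def)

lemma raise_commute: "raise i (raise j \<alpha>) = raise j (raise i \<alpha>)"
  by (simp add: fun_eq_iff raise_def)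

lemma raise_inject: "raise i \<alpha> = raise i \<beta> \<longleftrightarrow> \<alpha> = \<beta>"
  by (metis lower_raise)

lemma mfact_raise: "mfact (raise i \<alpha>) = real (Suc (\<alpha> i)) * mfact \<alpha>"
proof -
  have "mfact (raise i \<alpha>) = fact (Suc (\<alpha> i)) * (\<Prod>k\<in>UNIV - {i}. fact (\<alpha> k))"
    unfolding mfact_def by (subst prod.remove[of UNIV i]) (auto simp: raise_apply intro!: prod.cong)
  moreover have "mfact \<alpha> = fact (\<alpha> i) * (\<Prod>k\<in>UNIV - {i}. fact (\<alpha> k))"
    unfolding mfact_def by (rule prod.remove) auto
  ultimately show ?thesis
    by simp
qed

lemma g_multi_split:
  assumes "\<And>k. k \<noteq> i \<Longrightarrow> \<beta> k = \<alpha> k" and "\<And>k. k \<noteq> i \<Longrightarrow> y $ k = x $ k"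
  shows "g_multi \<beta> y = hermite (\<beta> i) (y $ i) * gauss1 (y $ i) * (\<Prod>k\<in>UNIV - {i}. hermite (\<alpha> k) (x $ k) * gauss1 (x $ k))"
  unfolding g_multi_def using assms by (subst prod.remove[of UNIV i]) (auto intro!: prod.cong)

lemma g_multi_axis_has_real_derivative:
  "((\<lambda>t. g_multi \<alpha> (x + t *\<^sub>R axis i 1)) has_real_derivative - g_multi (raise i \<alpha>) x) (at 0)"
proof -
  define K where "K = (\<Prod>k\<in>UNIV - {i}. hermite (\<alpha> k) (x $ k) * gauss1 (x $ k))"
  have shift: "((\<lambda>t. x $ i + t) has_real_derivative 1) (at 0)"
    by (auto intro!: derivative_eq_intros)
  have "((\<lambda>t. hermite (\<alpha> i) (x $ i + t) * gauss1 (x $ i + t)) has_real_derivative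
      - (hermite (Suc (\<alpha> i)) (x $ i) * gauss1 (x $ i))) (at 0)"
    using DERIV_chain2[where f="\<lambda>y. hermite (\<alpha> i) y * gauss1 y", OF hermite_function_deriv shift]
    by simp
  then have "((\<lambda>t. hermite (\<alpha> i) (x $ i + t) * gauss1 (x $ i + t) * K) has_real_derivative
      - (hermite (Suc (\<alpha> i)) (x $ i) * gauss1 (x $ i)) * K) (at 0)"
    by (rule DERIV_cmult_right)
  moreover have "g_multi \<alpha> (x + t *\<^sub>R axis i 1) = hermite (\<alpha> i) (x $ i + t) * gauss1 (x $ i + t) * K" for t
    unfolding K_def by (subst g_multi_split[of i]) (auto simp: axis_def)
  moreover have "g_multi (raise i \<alpha>) x = hermite (Suc (\<alpha> i)) (x $ i) * gauss1 (x $ i) * K"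
    unfolding K_def by (subst g_multi_split[of i]) (auto simp: raise_apply)
  ultimately show ?thesis
    by simp
qed

lemma vec_nth_mult_g_multi:
  "x $ j * g_multi \<alpha> x = g_multi (raise j \<alpha>) x + real (\<alpha> j) * g_multi (lower j \<alpha>) x"
proof -
  define K where "K = (\<Prod>k\<in>UNIV - {j}. hermite (\<alpha> k) (x $ k) * gauss1 (x $ k))"
  have "g_multi \<beta> x = hermite (\<beta> j) (x $ j) * gauss1 (x $ j) * K" if "\<And>k. k \<noteq> j \<Longrightarrow> \<beta> k = \<alpha> k" for \<beta>
    unfolding K_def using that by (intro g_multi_split) auto
  then show ?thesis
    by (simp add: raise_apply lower_apply hermite_Suc algebra_simps)
qed

section \<open>The Fokker--Planck operator on Hermite expansions\<close>

lemma partial_g_multi_sum: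
  "partial i (\<lambda>y. \<Sum>\<alpha>\<in>S. c \<alpha> * g_multi \<alpha> y) y = - (\<Sum>\<alpha>\<in>S. c \<alpha> * g_multi (raise i \<alpha>) y)"
proof -
  have "((\<lambda>t. \<Sum>\<alpha>\<in>S. c \<alpha> * g_multi \<alpha> (y + t *\<^sub>R axis i 1)) has_real_derivative
      (\<Sum>\<alpha>\<in>S. c \<alpha> * - g_multi (raise i \<alpha>) y)) (at 0)"
    by (intro DERIV_sum DERIV_cmult g_multi_axis_has_real_derivative)
  then show ?thesis
    unfolding partial_def by (simp add: DERIV_imp_deriv sum_negf)
qed

lemma sum_sym_part_mult:
  assumes "\<And>i j. a i j = a j i"
  shows "(\<Sum>i\<in>UNIV. \<Sum>j\<in>UNIV. sym_part C $ i $ j * a i j) = (\<Sum>i\<in>UNIV. \<Sum>j\<in>UNIV. C $ i $ j * a i j)"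
proof -
  have "(\<Sum>i\<in>UNIV. \<Sum>j\<in>UNIV. C $ j $ i * a i j) = (\<Sum>i\<in>UNIV. \<Sum>j\<in>UNIV. C $ i $ j * a i j)"
    using assms by (subst sum.swap) simp
  moreover have "sym_part C $ i $ j * a i j = C $ i $ j * a i j / 2 + C $ j $ i * a i j / 2" for i j
    by (simp add: sym_part_def transpose_def field_simps)
  then have "(\<Sum>i\<in>UNIV. \<Sum>j\<in>UNIV. sym_part C $ i $ j * a i j)
      = (\<Sum>i\<in>UNIV. \<Sum>j\<in>UNIV. C $ i $ j * a i j) / 2 + (\<Sum>i\<in>UNIV. \<Sum>j\<in>UNIV. C $ j $ i * a i j) / 2"
    by (simp add: sum.distrib sum_divide_distrib)
  ultimately show ?thesis
    by simp
qed

lemma sum_FP_terms_g_multi: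
  "(\<Sum>i\<in>UNIV. (\<Sum>j\<in>UNIV. C $ i $ j * x $ j) * g_multi (raise i \<alpha>) x - C $ i $ i * g_multi \<alpha> x
       - (\<Sum>j\<in>UNIV. sym_part C $ i $ j * g_multi (raise i (raise j \<alpha>)) x))
   = (\<Sum>i\<in>UNIV. \<Sum>j\<in>UNIV. C $ i $ j * real (\<alpha> j) * g_multi (lower j (raise i \<alpha>)) x)"
proof -
  have coord: "(\<Sum>j\<in>UNIV. C $ i $ j * x $ j) * g_multi (raise i \<alpha>) x
      = (\<Sum>j\<in>UNIV. C $ i $ j * g_multi (raise i (raise j \<alpha>)) x)
        + (\<Sum>j\<in>UNIV. C $ i $ j * real (\<alpha> j) * g_multi (lower j (raise i \<alpha>)) x) + C $ i $ i * g_multi \<alpha> x" for i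
  proof -
    have "C $ i $ j * x $ j * g_multi (raise i \<alpha>) x = C $ i $ j * g_multi (raise i (raise j \<alpha>)) x
        + C $ i $ j * real (\<alpha> j) * g_multi (lower j (raise i \<alpha>)) x
        + (if j = i then C $ i $ i * g_multi \<alpha> x else 0)" for j
      using arg_cong[where f="\<lambda>z. C $ i $ j * z", OF vec_nth_mult_g_multi[of x j "raise i \<alpha>"]]
      by (cases "j = i") (auto simp: raise_apply raise_commute algebra_simps)
    then show ?thesis
      by (simp add: sum_distrib_right sum.distrib)
  qed
  have "(\<Sum>i\<in>UNIV. \<Sum>j\<in>UNIV. sym_part C $ i $ j * g_multi (raise i (raise j \<alpha>)) x)
      = (\<Sum>i\<in>UNIV. \<Sum>j\<in>UNIV. C $ i $ j * g_multi (raise i (raise j \<alpha>)) x)"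
    by (rule sum_sym_part_mult) (simp add: raise_commute)
  then show ?thesis
    by (simp add: coord sum.distrib sum_subtractf raise_commute)
qed

lemma FP_op_g_multi_sum:
  "FP_op C (\<lambda>x. \<Sum>\<alpha>\<in>S. c \<alpha> * g_multi \<alpha> x) x
     = (\<Sum>\<alpha>\<in>S. c \<alpha> * (\<Sum>i\<in>UNIV. \<Sum>j\<in>UNIV. C $ i $ j * real (\<alpha> j) * g_multi (lower j (raise i \<alpha>)) x))"
proof -
  define f where "f = (\<lambda>x. \<Sum>\<alpha>\<in>S. c \<alpha> * g_multi \<alpha> x)"
  define flux where "flux i \<alpha> y = (\<Sum>j\<in>UNIV. C $ i $ j * y $ j) * g_multi \<alpha> y
      - (\<Sum>j\<in>UNIV. sym_part C $ i $ j * g_multi (raise j \<alpha>) y)" for i \<alpha> y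
  define FP_term where "FP_term i \<alpha> = (\<Sum>j\<in>UNIV. C $ i $ j * x $ j) * g_multi (raise i \<alpha>) x - C $ i $ i * g_multi \<alpha> x
      - (\<Sum>j\<in>UNIV. sym_part C $ i $ j * g_multi (raise i (raise j \<alpha>)) x)" for i \<alpha>
  have flux_sum: "(\<Sum>j\<in>UNIV. sym_part C $ i $ j * partial j f y) + (\<Sum>j\<in>UNIV. C $ i $ j * y $ j) * f y
      = (\<Sum>\<alpha>\<in>S. c \<alpha> * flux i \<alpha> y)" for i y
    unfolding f_def flux_def partial_g_multi_sum
    by (simp add: sum_distrib_left sum_distrib_right sum_subtractf sum_negf algebra_simps sum.swap[of _ UNIV S])
  have "(\<Sum>j\<in>UNIV. C $ i $ j * (x + t *\<^sub>R axis i 1) $ j)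
      = (\<Sum>j\<in>UNIV. C $ i $ j * x $ j + (if j = i then t * C $ i $ i else 0))" for i t
    by (rule sum.cong) (auto simp: axis_def algebra_simps)
  then have "(\<Sum>j\<in>UNIV. C $ i $ j * (x + t *\<^sub>R axis i 1) $ j) = (\<Sum>j\<in>UNIV. C $ i $ j * x $ j) + t * C $ i $ i" for i t
    by (simp add: sum.distrib)
  then have "((\<lambda>t. flux i \<alpha> (x + t *\<^sub>R axis i 1)) has_real_derivative - FP_term i \<alpha>) (at 0)" for i \<alpha>
    unfolding flux_def FP_term_def
    by (auto intro!: derivative_eq_intros g_multi_axis_has_real_derivative simp: algebra_simps sum_negf)
  then have "partial i (\<lambda>y. \<Sum>\<alpha>\<in>S. c \<alpha> * flux i \<alpha> y) x = (\<Sum>\<alpha>\<in>S. c \<alpha> * - FP_term i \<alpha>)" for i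
    unfolding partial_def by (intro DERIV_imp_deriv DERIV_sum DERIV_cmult)
  then have "FP_op C f x = (\<Sum>\<alpha>\<in>S. c \<alpha> * (\<Sum>i\<in>UNIV. FP_term i \<alpha>))"
    unfolding FP_op_def flux_sum by (simp add: sum.swap[of _ UNIV S] sum_distrib_left sum_negf)
  then show ?thesis
    unfolding f_def FP_term_def sum_FP_terms_g_multi .
qed

lemma mfact_lower_raise:
  "real (\<alpha> j) * (if lower j (raise i \<alpha>) = \<beta> then mfact \<beta> else 0)
     = (if \<exists>\<gamma>. \<alpha> = raise j \<gamma> \<and> \<beta> = raise i \<gamma> then real (\<alpha> j) * real (\<beta> i) * mfact (lower j \<alpha>) else 0)"
proof (cases "\<alpha> j = 0")
  case True
  then show ?thesis
    by (auto simp: raise_apply)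
next
  case False
  define \<gamma> where "\<gamma> = lower j \<alpha>"
  have \<alpha>: "\<alpha> = raise j \<gamma>"
    using False by (simp add: \<gamma>_def raise_lower)
  have "lower j (raise i \<alpha>) = raise i \<gamma>"
    by (metis \<alpha> lower_raise raise_commute)
  then show ?thesis
    by (auto simp: \<alpha> raise_inject mfact_raise raise_apply)
qed

lemma H_inner_g_multi_lower_raise:
  "real (\<alpha> j) * H_inner (g_multi (lower j (raise i \<alpha>))) (g_multi \<beta>)
     = real (\<beta> i) * H_inner (g_multi \<alpha>) (g_multi (lower i (raise j \<beta>)))"
proof -
  have "real (\<alpha> j) * H_inner (g_multi (lower j (raise i \<alpha>))) (g_multi \<beta>)
      = real (\<alpha> j) * (if lower j (raise i \<alpha>) = \<beta> then mfact \<beta> else 0)"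
    by (simp add: H_inner_g_multi)
  moreover have "real (\<beta> i) * H_inner (g_multi \<alpha>) (g_multi (lower i (raise j \<beta>)))
      = real (\<beta> i) * (if lower i (raise j \<beta>) = \<alpha> then mfact \<alpha> else 0)"
    by (auto simp: H_inner_g_multi)
  ultimately show ?thesis
    unfolding mfact_lower_raise by auto
qed

lemma H_inner_FP_op_g_multi_sum:
  fixes C :: "real^'n^'n"
  assumes f_eq: "f = (\<lambda>x. \<Sum>\<alpha>\<in>S. c \<alpha> * g_multi \<alpha> x)"
  shows "H_inner (FP_op C f) (g_multi \<beta>)
     = (\<Sum>i\<in>UNIV. \<Sum>j\<in>UNIV. C $ i $ j * real (\<beta> i) * H_inner f (g_multi (lower i (raise j \<beta>))))"
proof -
  define w where "w = (\<lambda>(\<alpha>::'n \<Rightarrow> nat, i::'n, j::'n). c \<alpha> * C $ i $ j * real (\<alpha> j))"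
  define \<gamma> where "\<gamma> = (\<lambda>(\<alpha>::'n \<Rightarrow> nat, i::'n, j::'n). lower j (raise i \<alpha>))"
  have nest: "(\<Sum>p\<in>S \<times> UNIV \<times> UNIV. F p) = (\<Sum>\<alpha>\<in>S. \<Sum>i\<in>UNIV. \<Sum>j\<in>UNIV. F (\<alpha>, i, j))"
    for F :: "('n \<Rightarrow> nat) \<times> 'n \<times> 'n \<Rightarrow> real"
    by (simp add: sum.cartesian_product)
  have "FP_op C f = (\<lambda>x. \<Sum>p\<in>S \<times> UNIV \<times> UNIV. w p * g_multi (\<gamma> p) x)"
    unfolding f_eq nest w_def \<gamma>_def by (simp add: fun_eq_iff FP_op_g_multi_sum sum_distrib_left mult.assoc)
  then have "H_inner (FP_op C f) (g_multi \<beta>) = (\<Sum>p\<in>S \<times> UNIV \<times> UNIV. w p * H_inner (g_multi (\<gamma> p)) (g_multi \<beta>))"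
    by (simp only: H_inner_sum_g_multi)
  also have "\<dots> = (\<Sum>\<alpha>\<in>S. \<Sum>i\<in>UNIV. \<Sum>j\<in>UNIV. c \<alpha> * C $ i $ j * (real (\<alpha> j) * H_inner (g_multi (lower j (raise i \<alpha>))) (g_multi \<beta>)))"
    unfolding nest w_def \<gamma>_def by (simp add: mult.assoc)
  also have "\<dots> = (\<Sum>\<alpha>\<in>S. \<Sum>i\<in>UNIV. \<Sum>j\<in>UNIV. c \<alpha> * C $ i $ j * (real (\<beta> i) * H_inner (g_multi \<alpha>) (g_multi (lower i (raise j \<beta>)))))"
    by (simp only: H_inner_g_multi_lower_raise)
  also have "\<dots> = (\<Sum>i\<in>UNIV. \<Sum>j\<in>UNIV. C $ i $ j * real (\<beta> i) * (\<Sum>\<alpha>\<in>S. c \<alpha> * H_inner (g_multi \<alpha>) (g_multi (lower i (raise j \<beta>)))))"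
    by (simp add: sum.swap[of _ S] sum_distrib_left mult_ac)
  also have "\<dots> = (\<Sum>i\<in>UNIV. \<Sum>j\<in>UNIV. C $ i $ j * real (\<beta> i) * H_inner f (g_multi (lower i (raise j \<beta>))))"
    by (simp add: f_eq H_inner_sum_g_multi[where \<gamma>="\<lambda>\<alpha>. \<alpha>"])
  finally show ?thesis .
qed

section \<open>Fock space coordinates\<close>

lemma Psi_eq_H_inner:
  assumes "length xs = m"
  shows "Psi f m xs = H_inner f (g_multi (multi_of xs)) / sqrt (fact m)"
proof (cases "m = 0")
  case True
  then have "multi_of xs = (\<lambda>_. 0)"
    using assms by (simp add: multi_of_def)
  with True show ?thesis
    by (simp add: Psi_def f_inf_eq_g_multi_0)
next
  case False
  define \<alpha> where "\<alpha> = multi_of xs"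
  have "Psi f m xs = sqrt (fact m) * (H_inner f (g_multi \<alpha>) / mfact \<alpha>) / (fact m / mfact \<alpha>)"
    using False by (simp add: Psi_def d_coeff_def gamma_coeff_def H_inner_g_multi mfact_def \<alpha>_def)
  also have "\<dots> = H_inner f (g_multi \<alpha>) * (sqrt (fact m) / fact m)"
    using mfact_pos[of \<alpha>] by simp
  also have "sqrt (fact m) / fact m = 1 / sqrt (fact m)"
    by (simp add: field_simps)
  finally show ?thesis
    by (simp add: \<alpha>_def)
qed

lemma multi_of_list_update:
  assumes "r < length xs"
  shows "multi_of (xs[r := j]) = lower (xs ! r) (raise j (multi_of xs))"
  using assms by (auto simp: fun_eq_iff multi_of_def mset_update lower_apply raise_apply)

lemma sum_nth_eq_sum_multi_of:
  fixes F :: "'n::finite \<Rightarrow> real"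
  shows "(\<Sum>r<length xs. F (xs ! r)) = (\<Sum>i\<in>UNIV. real (multi_of xs i) * F i)"
proof (induction xs)
  case (Cons a xs)
  have "(\<Sum>r<length (a # xs). F ((a # xs) ! r)) = F a + (\<Sum>r<length xs. F (xs ! r))"
    by (simp only: length_Cons sum.lessThan_Suc_shift nth_Cons_0 nth_Cons_Suc)
  also have "\<dots> = (\<Sum>i\<in>UNIV. (if i = a then F i else 0) + real (multi_of xs i) * F i)"
    using Cons by (simp add: sum.distrib)
  also have "\<dots> = (\<Sum>i\<in>UNIV. real (multi_of (a # xs) i) * F i)"
    by (intro sum.cong) (auto simp: multi_of_def algebra_simps)
  finally show ?case .
qed (simp add: multi_of_def)

theorem proposition7p5:
  fixes C :: "real^'n^'n" and S :: "('n \<Rightarrow> nat) set" and c :: "('n \<Rightarrow> nat) \<Rightarrow> real"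
    and f :: "real^'n \<Rightarrow> real"
  assumes "condition_A C"
    and "finite S"
    and "f = (\<lambda>x. \<Sum>\<alpha>\<in>S. c \<alpha> * g_multi \<alpha> x)"
  shows "\<forall>m xs. length xs = m \<longrightarrow> Psi (FP_op C f) m xs = dGamma C (Psi f) m xs"
proof (intro allI impI)
  fix m and xs :: "'n list"
  assume len: "length xs = m"
  define \<beta> where "\<beta> = multi_of xs"
  define G where "G i = (\<Sum>j\<in>UNIV. C $ i $ j * H_inner f (g_multi (lower i (raise j \<beta>))))" for i
  have "Psi (FP_op C f) m xs = H_inner (FP_op C f) (g_multi \<beta>) / sqrt (fact m)"
    using len by (simp add: Psi_eq_H_inner \<beta>_def)
  also have "H_inner (FP_op C f) (g_multi \<beta>) = (\<Sum>i\<in>UNIV. real (\<beta> i) * G i)"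
    unfolding H_inner_FP_op_g_multi_sum[OF assms(3)] G_def by (simp add: sum_distrib_left mult_ac)
  also have "\<dots> = (\<Sum>r<m. G (xs ! r))"
    unfolding \<beta>_def len[symmetric] by (rule sum_nth_eq_sum_multi_of[symmetric])
  also have "\<dots> / sqrt (fact m) = dGamma C (Psi f) m xs"
    using len by (simp add: dGamma_def G_def Psi_eq_H_inner multi_of_list_update \<beta>_def sum_divide_distrib)
  finally show "Psi (FP_op C f) m xs = dGamma C (Psi f) m xs" .
qed

end
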